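(* Let $A$ and $B$ be convex bodies in $\mathbb{R}^2$ and let $A'$ be a vertical stretching of $A$. Let $m=|\pi(A)|$ and $n=|\pi(B)|$ be the lengths of the projections onto the first coordinate. Then $$|A+B|=\left(\frac{|A|}{m}+\frac{|B|}{n}\right)(m+n)$$ if and only if $$|A'+B|=\left(\frac{|A'|}{m}+\frac{|B|}{n}\right)(m+n).$$
   Context: A convex body is a compact convex set with nonempty interior; $|X|$ denotes area; $\pi(x,y)=x$. A convex body $A$ with $\pi(A)=[0,m]$ can be written $A=\{(x,y): x\in[0,m],\ u_A(x)\le y\le v_A(x)\}$ with $u_A$ convex and $v_A$ concave. A vertical stretching of $A$ of amount $h\ge 0$ is the set $\{(x,y): x\in\pi(A),\ u_A(x)\le y\le v_A(x)+h\}$. *)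

theory Defs
  imports "HOL-Analysis.Analysis"
begin

definition convex_body :: "(real \<times> real) set \<Rightarrow> bool" where
  "convex_body K \<longleftrightarrow> compact K \<and> convex K \<and> interior K \<noteq> {}"

definition minkowski_sum :: "(real \<times> real) set \<Rightarrow> (real \<times> real) set \<Rightarrow> (real \<times> real) set" where
  "minkowski_sum A B = {a + b | a b. a \<in> A \<and> b \<in> B}"

definition area :: "(real \<times> real) set \<Rightarrow> real" where
  "area X = measure lebesgue X"

definition proj1 :: "(real \<times> real) set \<Rightarrow> real set" where
  "proj1 A = fst ` A"

definition lower_fun :: "(real \<times> real) set \<Rightarrow> real \<Rightarrow> real" where
  "lower_fun A x = Inf {y. (x, y) \<in> A}"

definition upper_fun :: "(real \<times> real) set \<Rightarrow> real \<Rightarrow> real" where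
  "upper_fun A x = Sup {y. (x, y) \<in> A}"

definition vertical_stretching :: "(real \<times> real) set \<Rightarrow> real \<Rightarrow> (real \<times> real) set" where
  "vertical_stretching A h =
     {(x, y). x \<in> proj1 A \<and> lower_fun A x \<le> y \<and> y \<le> upper_fun A x + h}"

end

theory Submission
  imports Defs "HOL-Library.Interval"
begin

text \<open>A vertical stretching of a compact convex set \<open>K\<close> by \<open>h\<close> is the Minkowski sum of
  \<open>K\<close> with the vertical segment \<open>{0} \<times> {0..h}\<close>, since every vertical fibre of \<open>K\<close> is an
  interval. Cavalieri's principle then gives \<open>|K + {0} \<times> {0..h}| = |K| + h |\<pi>(K)|\<close>.
  As \<open>A' + B\<close> is the stretching of \<open>A + B\<close> by the same amount and \<open>|\<pi>(A + B)| = m + n\<close>,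
  both sides of the identity for \<open>A\<close> grow by exactly \<open>h (m + n)\<close> when \<open>A\<close> is replaced
  by \<open>A'\<close>.\<close>

lemma minkowski_sum_eq_set_plus: "minkowski_sum A B = A + B"
  unfolding minkowski_sum_def set_plus_def by blast

lemma fst_image_set_plus:
  fixes A B :: "('a::plus \<times> 'b::plus) set"
  shows "fst ` (A + B) = fst ` A + fst ` B"
  by (force simp: set_plus_def)

lemma compact_set_plus:
  fixes A B :: "'a::real_normed_vector set"
  assumes "compact A" "compact B"
  shows "compact (A + B)"
proof -
  have "A + B = {x + y |x y. x \<in> A \<and> y \<in> B}"
    by (auto simp: set_plus_def)
  then show ?thesis
    using compact_sums[OF assms] by simp
qed

lemma vimage_Pair_set_plus_zero_Times:
  fixes K :: "('a::comm_monoid_add \<times> 'b::ab_group_add) set"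
  shows "Pair x -` (K + {0} \<times> S) = Pair x -` K + S"
  by (force simp: set_plus_def)

lemma compact_convex_real_obtain_Icc:
  fixes S :: "real set"
  assumes "compact S" "convex S" "S \<noteq> {}"
  obtains a b where "a \<le> b" "S = {a..b}"
  by (metis assms atLeastatMost_empty_iff connected_compact_interval_1 convex_connected)

lemma compact_convex_fst_image_obtain_Icc:
  fixes K :: "(real \<times> real) set"
  assumes "compact K" "convex K" "K \<noteq> {}"
  obtains a b where "a \<le> b" "fst ` K = {a..b}"
proof (rule compact_convex_real_obtain_Icc)
  show "compact (fst ` K)"
    using assms(1) by (intro compact_continuous_image continuous_intros)
  show "convex (fst ` K)"
    using assms(2) by (rule convex_linear_image[OF linear_fst])
qed (use assms(3) in auto)


lemma vimage_Pair_eq_snd_image: "Pair x -` K = snd ` (K \<inter> {x} \<times> UNIV)"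
  by force

lemma vimage_Pair_eq_Icc_lower_upper:
  fixes K :: "(real \<times> real) set"
  assumes "compact K" "convex K" "x \<in> fst ` K"
  shows "lower_fun K x \<le> upper_fun K x" "Pair x -` K = {lower_fun K x..upper_fun K x}"
proof -
  have "compact (Pair x -` K)"
    unfolding vimage_Pair_eq_snd_image
    by (intro compact_continuous_image continuous_intros compact_Int_closed assms closed_Times
        closed_singleton closed_UNIV)
  moreover have "convex (Pair x -` K)"
    unfolding vimage_Pair_eq_snd_image
    by (intro convex_linear_image linear_snd convex_Int assms convex_Times convex_singleton
        convex_UNIV)
  moreover have "Pair x -` K \<noteq> {}" using assms(3) by force
  ultimately obtain a b where "a \<le> b" "Pair x -` K = {a..b}"
    by (rule compact_convex_real_obtain_Icc)
  moreover have "lower_fun K x = Inf (Pair x -` K)" "upper_fun K x = Sup (Pair x -` K)"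
    by (simp_all add: lower_fun_def upper_fun_def vimage_def)
  ultimately show "lower_fun K x \<le> upper_fun K x" "Pair x -` K = {lower_fun K x..upper_fun K x}"
    by simp_all
qed

lemma vimage_Pair_vertical_stretching:
  "Pair x -` vertical_stretching K h
     = (if x \<in> fst ` K then {lower_fun K x..upper_fun K x + h} else {})"
  by (auto simp: vertical_stretching_def proj1_def)

lemma vertical_stretching_eq_set_plus:
  fixes K :: "(real \<times> real) set"
  assumes "compact K" "convex K" "h \<ge> 0"
  shows "vertical_stretching K h = K + {0} \<times> {0..h}"
proof -
  have "Pair x -` vertical_stretching K h = Pair x -` (K + {0} \<times> {0..h})" for x
  proof (cases "x \<in> fst ` K")
    case True
    with vimage_Pair_eq_Icc_lower_upper[OF assms(1,2) this] show ?thesis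
      by (simp add: vimage_Pair_vertical_stretching vimage_Pair_set_plus_zero_Times Icc_plus_Icc
          assms(3))
  next
    case False
    then have "Pair x -` K = {}" by force
    with False show ?thesis
      by (simp add: vimage_Pair_vertical_stretching vimage_Pair_set_plus_zero_Times)
  qed
  then show ?thesis by (auto simp: set_eq_iff vimage_def)
qed

lemma emeasure_lborel_compact:
  fixes X :: "'a::euclidean_space set"
  assumes "compact X"
  shows "emeasure lborel X = ennreal (measure lebesgue X)"
proof -
  have "emeasure lborel X = ennreal (measure lborel X)"
    using emeasure_compact_finite[OF assms] by (simp add: emeasure_eq_ennreal_measure)
  also have "measure lborel X = measure lebesgue X"
    using assms by (simp add: borel_compact)
  finally show ?thesis .
qed

lemma
  fixes X :: "('a::euclidean_space \<times> 'b::euclidean_space) set"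
  assumes "X \<in> sets borel"
  shows emeasure_lborel_eq_nn_integral_vimage_Pair:
      "emeasure lborel X = (\<integral>\<^sup>+x. emeasure lborel (Pair x -` X) \<partial>lborel)"
    and measurable_emeasure_lborel_vimage_Pair:
      "(\<lambda>x. emeasure lborel (Pair x -` X)) \<in> borel_measurable lborel"
proof -
  have X: "X \<in> sets (lborel \<Otimes>\<^sub>M lborel)"
    using assms by (simp only: lborel_prod sets_lborel)
  have "emeasure lborel X = emeasure (lborel \<Otimes>\<^sub>M lborel) X"
    by (simp only: lborel_prod)
  also have "\<dots> = (\<integral>\<^sup>+x. emeasure lborel (Pair x -` X) \<partial>lborel)"
    using X by (rule lborel.emeasure_pair_measure_alt)
  finally show "emeasure lborel X = (\<integral>\<^sup>+x. emeasure lborel (Pair x -` X) \<partial>lborel)" .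
  show "(\<lambda>x. emeasure lborel (Pair x -` X)) \<in> borel_measurable lborel"
    using X by (rule lborel.measurable_emeasure_Pair)
qed

lemma area_vertical_stretching:
  fixes K :: "(real \<times> real) set"
  assumes "compact K" "convex K" "h \<ge> 0"
  shows "area (vertical_stretching K h) = area K + h * measure lebesgue (fst ` K)"
proof -
  have "compact (vertical_stretching K h)"
    unfolding vertical_stretching_eq_set_plus[OF assms]
    by (intro compact_set_plus compact_Times assms compact_Icc compact_sing)
  have "compact (fst ` K)"
    using assms(1) by (intro compact_continuous_image continuous_intros)
  have fibre: "emeasure lborel (Pair x -` vertical_stretching K h)
      = emeasure lborel (Pair x -` K) + ennreal h * indicator (fst ` K) x" for x
  proof (cases "x \<in> fst ` K")
    case True
    with vimage_Pair_eq_Icc_lower_upper[OF assms(1,2) this] show ?thesis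
      using assms(3)
      by (simp add: vimage_Pair_vertical_stretching)
        (subst ennreal_plus[symmetric]; simp add: algebra_simps)
  next
    case False
    then have "Pair x -` K = {}" by force
    with False show ?thesis by (simp add: vimage_Pair_vertical_stretching)
  qed
  have "ennreal (area (vertical_stretching K h)) = emeasure lborel (vertical_stretching K h)"
    unfolding area_def by (rule emeasure_lborel_compact[symmetric]) fact
  also have "\<dots> = (\<integral>\<^sup>+x. emeasure lborel (Pair x -` K) + ennreal h * indicator (fst ` K) x
      \<partial>lborel)"
    using \<open>compact (vertical_stretching K h)\<close>
    by (simp only: emeasure_lborel_eq_nn_integral_vimage_Pair borel_compact fibre)
  also have "\<dots> = (\<integral>\<^sup>+x. emeasure lborel (Pair x -` K) \<partial>lborel)
      + (\<integral>\<^sup>+x. ennreal h * indicator (fst ` K) x \<partial>lborel)"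
    using assms(1) \<open>compact (fst ` K)\<close>
    by (intro nn_integral_add measurable_emeasure_lborel_vimage_Pair)
      (auto simp: borel_compact intro!: borel_measurable_times_ennreal borel_measurable_indicator)
  also have "\<dots> = emeasure lborel K + ennreal h * emeasure lborel (fst ` K)"
    using assms(1) \<open>compact (fst ` K)\<close>
    by (simp only: emeasure_lborel_eq_nn_integral_vimage_Pair borel_compact
        nn_integral_cmult_indicator sets_lborel)
  also have "\<dots> = ennreal (area K + h * measure lebesgue (fst ` K))"
    using assms \<open>compact (fst ` K)\<close>
    by (simp add: area_def emeasure_lborel_compact ennreal_mult ennreal_plus)
  finally show ?thesis
    by (rule ennreal_inj[THEN iffD1, rotated 2]) (use assms(3) in \<open>auto simp: area_def\<close>)
qed

lemma vertical_stretching_set_plus: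
  fixes A B :: "(real \<times> real) set"
  assumes "compact A" "convex A" "compact B" "convex B" "h \<ge> 0"
  shows "vertical_stretching A h + B = vertical_stretching (A + B) h"
proof -
  have "compact (A + B)" "convex (A + B)"
    using assms by (simp_all add: compact_set_plus convex_set_plus)
  then show ?thesis
    using assms by (simp add: vertical_stretching_eq_set_plus ac_simps)
qed

lemma measure_fst_image_set_plus:
  fixes A B :: "(real \<times> real) set"
  assumes "compact A" "convex A" "A \<noteq> {}" "compact B" "convex B" "B \<noteq> {}"
  shows "measure lebesgue (fst ` (A + B))
    = measure lebesgue (fst ` A) + measure lebesgue (fst ` B)"
proof -
  obtain a1 a2 b1 b2 where "a1 \<le> a2" "fst ` A = {a1..a2}" "b1 \<le> b2" "fst ` B = {b1..b2}"
    using assms by (metis compact_convex_fst_image_obtain_Icc)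
  then show ?thesis
    by (simp add: fst_image_set_plus Icc_plus_Icc)
qed

lemma fst_image_interior_subset:
  fixes A :: "('a::metric_space \<times> 'b::metric_space) set"
  shows "fst ` interior A \<subseteq> interior (fst ` A)"
proof
  fix x assume "x \<in> fst ` interior A"
  then obtain p e where "x = fst p" "e > 0" "ball p e \<subseteq> A"
    by (auto simp: mem_interior)
  moreover have "(y, snd p) \<in> ball p e" if "y \<in> ball (fst p) e" for y
    using that by (cases p) (simp add: dist_Pair_Pair)
  ultimately have "ball x e \<subseteq> fst ` A"
    by (force intro: image_eqI[where x = "(_, snd p)"])
  then show "x \<in> interior (fst ` A)"
    using \<open>e > 0\<close> by (auto simp: mem_interior)
qed

lemma convex_body_measure_fst_image_pos:
  assumes "convex_body K"
  shows "measure lebesgue (fst ` K) > 0"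
proof -
  have K: "compact K" "convex K" "interior K \<noteq> {}"
    using assms by (simp_all add: convex_body_def)
  moreover have "K \<noteq> {}"
    using K(3) interior_subset by blast
  ultimately obtain a b where "a \<le> b" "fst ` K = {a..b}"
    by (metis compact_convex_fst_image_obtain_Icc)
  moreover have "interior (fst ` K) \<noteq> {}"
    using K(3) fst_image_interior_subset[of K] by blast
  ultimately show ?thesis by simp
qed

theorem lemma4p1:
  fixes A B A' :: "(real \<times> real) set" and h :: real
  assumes "convex_body A" and "convex_body B"
    and "h \<ge> 0" and "A' = vertical_stretching A h"
  defines "m \<equiv> measure lebesgue (proj1 A)"
    and "n \<equiv> measure lebesgue (proj1 B)"
  shows "area (minkowski_sum A B) = (area A / m + area B / n) * (m + n)
     \<longleftrightarrow> area (minkowski_sum A' B) = (area A' / m + area B / n) * (m + n)"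
proof -
  have A: "compact A" "convex A" "A \<noteq> {}" and B: "compact B" "convex B" "B \<noteq> {}"
    using assms(1,2) interior_subset by (auto simp: convex_body_def)
  have "m > 0"
    using convex_body_measure_fst_image_pos[OF assms(1)] by (simp add: m_def proj1_def)
  have "area A' = area A + h * m"
    using area_vertical_stretching[OF A(1,2) assms(3)] by (simp add: assms(4) m_def proj1_def)
  moreover have "area (minkowski_sum A' B) = area (minkowski_sum A B) + h * (m + n)"
    unfolding assms(4) minkowski_sum_eq_set_plus
      vertical_stretching_set_plus[OF A(1,2) B(1,2) assms(3)]
    using area_vertical_stretching
        [OF compact_set_plus[OF A(1) B(1)] convex_set_plus[OF A(2) B(2)] assms(3)]
    by (simp add: measure_fst_image_set_plus A B m_def n_def proj1_def)
  ultimately show ?thesis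
    using \<open>m > 0\<close> by (simp add: field_simps)
qed

end
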